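(* Let $2\leq k\leq d$, $\theta>0$, $v_1,\dots,v_k,w\in S^{d-1}$, and suppose $\Theta(\sigma(0,v_1,\dots,v_k))\geq\theta$. Then there exists $1\leq i\leq k$ such that $$\Theta(\sigma(0,v_1,\dots,v_{i-1},w,v_{i+1},\dots,v_k))\geq\frac{\theta}{k\,2^{k+1}}.$$
   Context: For $a_0,\dots,a_k\in\mathbb{R}^d$, $\sigma(a_0,\dots,a_k)=\operatorname{conv}\{a_0,\dots,a_k\}$, $|\sigma|$ denotes its $k$-dimensional volume, and for $\operatorname{diam}\sigma>0$ the fullness is $\Theta(\sigma)=|\sigma|/(\operatorname{diam}\sigma)^k$. $S^{d-1}$ is the unit sphere of $\mathbb{R}^d$. *)

theory Defs
  imports "HOL-Analysis.Analysis"
begin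

definition gram_det :: "nat \<Rightarrow> (nat \<Rightarrow> 'a::real_inner) \<Rightarrow> real" where
  "gram_det k u = (\<Sum>p | p permutes {..<k}. of_int (sign p) * (\<Prod>i<k. u i \<bullet> u (p i)))"

text \<open>k-dimensional volume of the simplex conv{a 0, ..., a k}:
  sqrt of the Gram determinant of the edge vectors a i - a 0, divided by k!.\<close>
definition simplex_vol :: "nat \<Rightarrow> (nat \<Rightarrow> 'a::real_inner) \<Rightarrow> real" where
  "simplex_vol k a = sqrt (gram_det k (\<lambda>i. a (Suc i) - a 0)) / fact k"

definition fullness :: "nat \<Rightarrow> (nat \<Rightarrow> 'a::real_inner) \<Rightarrow> real" where
  "fullness k a = simplex_vol k a / (diameter (convex hull (a ` {0..k}))) ^ k"

definition origin_pts :: "(nat \<Rightarrow> 'a::zero) \<Rightarrow> nat \<Rightarrow> 'a" where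
  "origin_pts v = (\<lambda>j. if j = 0 then 0 else v j)"

end

theory Submission
  imports Defs "Jordan_Normal_Form.Determinant"
begin

(* The volume of sigma(0, v_1, ..., v_k) is sqrt G / k!, where G is the Gram determinant of
   v_1, ..., v_k, and since the vertices lie in the unit ball and include 0 and a unit vector, the
   diameter lies between 1 and 2. So it suffices to find i such that replacing v_i by w multiplies G
   by at least 1/k^2. Write w = sum_j c_j v_j + p with p orthogonal to every v_j. Computing Gram
   determinants by projecting orthogonally onto the span of the other vectors, the replacement
   multiplies G by at least c_i^2 + |p|^2; and since |w| = 1 and |sum_j c_j v_j| <= k max_j |c_j|,
   an index i with maximal |c_i| gives c_i^2 + |p|^2 >= 1/k^2. This yields the bound
   theta / (k 2^k), a factor 2 better than claimed. *)

definition gram_mat :: "nat \<Rightarrow> (nat \<Rightarrow> 'a::real_inner) \<Rightarrow> real mat" where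
  "gram_mat k u = mat k k (\<lambda>(i, j). u i \<bullet> u j)"

lemma gram_mat_carrier [simp]: "gram_mat k u \<in> carrier_mat k k"
  by (simp add: gram_mat_def)

lemma gram_det_eq_det_gram_mat: "gram_det k u = det (gram_mat k u)"
  unfolding gram_det_def det_def gram_mat_def by (simp add: atLeast0LessThan)

lemma gram_det_permute:
  assumes p: "p permutes {..<k}"
  shows "gram_det k (u \<circ> p) = gram_det k u"
proof -
  let ?A = "gram_mat k u"
  let ?B = "mat k k (\<lambda>(i, j). ?A $$ (i, p j))"
  have p': "p permutes {0..<k}" using p by (simp add: atLeast0LessThan)
  have pk: "i < k \<Longrightarrow> p i < k" for i using permutes_in_image[OF p, of i] by simp
  have B: "?B \<in> carrier_mat k k" by simp
  have "transpose_mat ?B = mat k k (\<lambda>(i, j). transpose_mat ?A $$ (p i, j))"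
    by (rule eq_matI) (auto simp: pk gram_mat_def)
  hence "det (transpose_mat ?B) = signof p * det (transpose_mat ?A)"
    using det_permute_rows[OF _ p', of "transpose_mat ?A"] by simp
  hence det_B: "det ?B = signof p * det ?A"
    by (simp add: det_transpose[OF B] det_transpose[OF gram_mat_carrier])
  have "gram_mat k (u \<circ> p) = mat k k (\<lambda>(i, j). ?B $$ (p i, j))"
    by (rule eq_matI) (auto simp: pk gram_mat_def)
  hence "det (gram_mat k (u \<circ> p)) = signof p * det ?B"
    using det_permute_rows[OF B p'] by simp
  also have "\<dots> = (signof p * signof p) * det ?A" by (simp add: det_B)
  also have "signof p * signof p = (1::real)" by (simp add: sign_def)
  finally show ?thesis by (simp add: gram_det_eq_det_gram_mat o_def)
qed

lemma gram_det_change_of_basis: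
  fixes u :: "nat \<Rightarrow> 'a::real_inner"
  assumes T: "T \<in> carrier_mat k k"
    and u': "\<And>i. i < k \<Longrightarrow> u' i = (\<Sum>l<k. T $$ (l, i) *\<^sub>R u l)"
  shows "gram_det k u' = (det T)\<^sup>2 * gram_det k u"
proof -
  have "gram_mat k u' = transpose_mat T * gram_mat k u * T"
  proof (rule eq_matI)
    fix i j assume "i < dim_row (transpose_mat T * gram_mat k u * T)"
      and "j < dim_col (transpose_mat T * gram_mat k u * T)"
    hence i: "i < k" and j: "j < k" using T by auto
    have "gram_mat k u' $$ (i, j) = u' i \<bullet> u' j" using i j by (simp add: gram_mat_def)
    also have "\<dots> = (\<Sum>m<k. \<Sum>l<k. T $$ (l, i) * (u l \<bullet> u m) * T $$ (m, j))"
      by (simp add: u' i j inner_sum_left inner_sum_right sum_distrib_left mult_ac inner_commute)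
    also have "\<dots> = (\<Sum>m<k. (\<Sum>l<k. T $$ (l, i) * (u l \<bullet> u m)) * T $$ (m, j))"
      by (simp add: sum_distrib_right)
    also have "\<dots> = (transpose_mat T * gram_mat k u * T) $$ (i, j)"
      using T i j by (simp add: scalar_prod_def gram_mat_def atLeast0LessThan carrier_matD)
    finally show "gram_mat k u' $$ (i, j) = (transpose_mat T * gram_mat k u * T) $$ (i, j)" .
  qed (use T in \<open>auto simp: gram_mat_def\<close>)
  hence "det (gram_mat k u') = det (transpose_mat T) * det (gram_mat k u) * det T"
    using T by (simp add: det_mult[of _ k])
  thus ?thesis using T by (simp add: det_transpose gram_det_eq_det_gram_mat power2_eq_square)
qed

lemma gram_det_add_combination_last:
  fixes u :: "nat \<Rightarrow> 'a::real_inner"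
  shows "gram_det (Suc n) (u(n := x + (\<Sum>j<n. c j *\<^sub>R u j))) = gram_det (Suc n) (u(n := x))"
proof -
  define T :: "real mat" where
    "T = mat (Suc n) (Suc n) (\<lambda>(l, i). if l = i then 1 else if i = n \<and> l < n then c l else 0)"
  have T: "T \<in> carrier_mat (Suc n) (Suc n)" by (simp add: T_def)
  have "det T = prod_list (diag_mat T)"
    by (rule det_upper_triangular[OF _ T]) (auto simp: T_def upper_triangular_def)
  also have "diag_mat T = map (\<lambda>_. 1) [0..<Suc n]"
    by (auto simp: diag_mat_def T_def)
  finally have det_T: "det T = 1" by (simp del: upt_Suc add: map_replicate_const)
  have "gram_det (Suc n) (u(n := x + (\<Sum>j<n. c j *\<^sub>R u j)))
      = (det T)\<^sup>2 * gram_det (Suc n) (u(n := x))"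
  proof (rule gram_det_change_of_basis[OF T])
    fix i assume i: "i < Suc n"
    show "(u(n := x + (\<Sum>j<n. c j *\<^sub>R u j))) i = (\<Sum>l<Suc n. T $$ (l, i) *\<^sub>R (u(n := x)) l)"
    proof (cases "i = n")
      case True
      thus ?thesis by (simp add: T_def add.commute)
    next
      case False
      have "(\<Sum>l<Suc n. T $$ (l, i) *\<^sub>R (u(n := x)) l) = (\<Sum>l<Suc n. if l = i then u i else 0)"
        by (rule sum.cong) (use i False in \<open>auto simp: T_def\<close>)
      thus ?thesis using i False by simp
    qed
  qed
  thus ?thesis by (simp add: det_T)
qed

lemma gram_det_orthogonal_last:
  fixes u :: "nat \<Rightarrow> 'a::real_inner"
  assumes "\<And>j. j < n \<Longrightarrow> y \<bullet> u j = 0"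
  shows "gram_det (Suc n) (u(n := y)) = (y \<bullet> y) * gram_det n u"
proof -
  have "gram_mat (Suc n) (u(n := y))
      = four_block_mat (gram_mat n u) (0\<^sub>m n 1) (0\<^sub>m 1 n) (mat 1 1 (\<lambda>_. y \<bullet> y))"
    by (rule eq_matI)
      (auto simp: gram_mat_def four_block_mat_def assms inner_commute[of "u _" y])
  hence "det (gram_mat (Suc n) (u(n := y))) = det (gram_mat n u) * det (mat 1 1 (\<lambda>_. y \<bullet> y))"
    by (simp add: det_four_block_mat_lower_left_zero[of _ n _ 1])
  thus ?thesis by (simp add: gram_det_eq_det_gram_mat det_single mult.commute)
qed

lemma gram_det_update_last:
  fixes u :: "nat \<Rightarrow> 'a::real_inner"
  assumes "\<And>j. j < n \<Longrightarrow> y \<bullet> u j = 0"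
  shows "gram_det (Suc n) (u(n := (\<Sum>j<n. c j *\<^sub>R u j) + y)) = (y \<bullet> y) * gram_det n u"
  using gram_det_add_combination_last[where u=u and n=n and x=y and c=c]
    gram_det_orthogonal_last[OF assms] by (simp add: add.commute)

lemma span_image_lessThan:
  fixes u :: "nat \<Rightarrow> 'a::real_vector"
  shows "span (u ` {..<n}) = range (\<lambda>c. \<Sum>j<n. c j *\<^sub>R u j)"
proof (induction n)
  case 0
  show ?case by auto
next
  case (Suc n)
  have "span (u ` {..<Suc n}) = {x. \<exists>a. x - a *\<^sub>R u n \<in> range (\<lambda>c. \<Sum>j<n. c j *\<^sub>R u j)}"
    by (simp add: lessThan_Suc span_insert Suc.IH)
  also have "\<dots> = range (\<lambda>c. \<Sum>j<Suc n. c j *\<^sub>R u j)"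
  proof safe
    fix x a c assume "x - a *\<^sub>R u n = (\<Sum>j<n. c j *\<^sub>R u j)"
    hence "x = (\<Sum>j<Suc n. (c(n := a)) j *\<^sub>R u j)" by (simp add: algebra_simps)
    thus "x \<in> range (\<lambda>c. \<Sum>j<Suc n. c j *\<^sub>R u j)" by blast
  next
    fix c
    show "\<exists>a. (\<Sum>j<Suc n. c j *\<^sub>R u j) - a *\<^sub>R u n \<in> range (\<lambda>c. \<Sum>j<n. c j *\<^sub>R u j)"
      by (rule exI[of _ "c n"]) simp
  qed
  finally show ?case .
qed

lemma orthogonal_decomposition_lessThan:
  fixes u :: "nat \<Rightarrow> 'a::euclidean_space"
  obtains c p where "x = (\<Sum>j<n. c j *\<^sub>R u j) + p" and "\<And>j. j < n \<Longrightarrow> p \<bullet> u j = 0"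
proof -
  obtain y p where y: "y \<in> span (u ` {..<n})"
    and p: "\<And>z. z \<in> span (u ` {..<n}) \<Longrightarrow> p \<bullet> z = 0" and x: "x = y + p"
    using orthogonal_subspace_decomp_exists[of "u ` {..<n}" x]
    unfolding real_inner_class.orthogonal_def by metis
  obtain c where "y = (\<Sum>j<n. c j *\<^sub>R u j)" using y by (auto simp: span_image_lessThan)
  moreover have "p \<bullet> u j = 0" if "j < n" for j using p that by (simp add: span_base)
  ultimately show ?thesis using that x by blast
qed

lemma gram_det_nonneg:
  fixes u :: "nat \<Rightarrow> 'a::euclidean_space"
  shows "0 \<le> gram_det n u"
proof (induction n)
  case 0
  show ?case by (simp add: gram_det_eq_det_gram_mat gram_mat_def)
next
  case (Suc n)
  obtain c q where un: "u n = (\<Sum>j<n. c j *\<^sub>R u j) + q"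
    and q: "\<And>j. j < n \<Longrightarrow> q \<bullet> u j = 0"
    using orthogonal_decomposition_lessThan[where x="u n" and n=n and u=u] by blast
  have "gram_det (Suc n) (u(n := (\<Sum>j<n. c j *\<^sub>R u j) + q)) = (q \<bullet> q) * gram_det n u"
    using q by (rule gram_det_update_last)
  hence "gram_det (Suc n) u = (q \<bullet> q) * gram_det n u"
    by (simp flip: un)
  thus ?case using Suc by simp
qed

lemma norm_orthogonal_component_le:
  fixes u :: "nat \<Rightarrow> 'a::real_inner"
  assumes x: "x = (\<Sum>j<n. d j *\<^sub>R u j) + q" and q: "\<And>j. j < n \<Longrightarrow> q \<bullet> u j = 0"
  shows "norm q \<le> norm x"
proof -
  have "q \<bullet> (\<Sum>j<n. d j *\<^sub>R u j) = 0"
    using q by (simp add: inner_sum_right)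
  hence "(norm x)\<^sup>2 = (norm (\<Sum>j<n. d j *\<^sub>R u j))\<^sup>2 + (norm q)\<^sup>2"
    using norm_add_Pythagorean[of "\<Sum>j<n. d j *\<^sub>R u j" q] x
    by (simp add: real_inner_class.orthogonal_def inner_commute)
  hence "(norm q)\<^sup>2 \<le> (norm x)\<^sup>2"
    using zero_le_power2[of "norm (\<Sum>j<n. d j *\<^sub>R u j)"] by linarith
  thus ?thesis by (rule power2_le_imp_le) simp
qed

lemma gram_det_replace_last_ge:
  fixes u :: "nat \<Rightarrow> 'a::euclidean_space"
  assumes un_le: "norm (u n) \<le> 1" and p: "\<And>j. j \<le> n \<Longrightarrow> p \<bullet> u j = 0"
  shows "((c n)\<^sup>2 + p \<bullet> p) * gram_det (Suc n) u
    \<le> gram_det (Suc n) (u(n := (\<Sum>j<Suc n. c j *\<^sub>R u j) + p))"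
proof -
  obtain d q where un: "u n = (\<Sum>j<n. d j *\<^sub>R u j) + q"
    and q: "\<And>j. j < n \<Longrightarrow> q \<bullet> u j = 0"
    using orthogonal_decomposition_lessThan[where x="u n" and n=n and u=u] by blast
  define G where "G = gram_det n u"
  have "gram_det (Suc n) (u(n := (\<Sum>j<n. d j *\<^sub>R u j) + q)) = (q \<bullet> q) * G"
    unfolding G_def using q by (rule gram_det_update_last)
  hence G_Suc: "gram_det (Suc n) u = (q \<bullet> q) * G"
    by (simp flip: un)
  have "p \<bullet> u n = p \<bullet> (\<Sum>j<n. d j *\<^sub>R u j) + p \<bullet> q"
    by (simp add: un inner_add_right)
  hence "q \<bullet> p = 0"
    using p by (simp add: inner_sum_right inner_commute)
  hence qp: "(c n *\<^sub>R q + p) \<bullet> (c n *\<^sub>R q + p) = (c n)\<^sup>2 * (q \<bullet> q) + p \<bullet> p"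
    by (simp add: inner_add_left inner_add_right inner_commute power2_eq_square)
  have "(\<Sum>j<Suc n. c j *\<^sub>R u j) + p = (\<Sum>j<n. (c j + c n * d j) *\<^sub>R u j) + (c n *\<^sub>R q + p)"
    using un by (simp add: algebra_simps scaleR_sum_right sum.distrib)
  moreover have "(c n *\<^sub>R q + p) \<bullet> u j = 0" if "j < n" for j
    using p q that by (simp add: inner_add_left)
  ultimately have G_replaced: "gram_det (Suc n) (u(n := (\<Sum>j<Suc n. c j *\<^sub>R u j) + p))
      = ((c n)\<^sup>2 * (q \<bullet> q) + p \<bullet> p) * G"
    unfolding G_def qp[symmetric] by (simp only: gram_det_update_last)
  have "norm q \<le> 1"
    using norm_orthogonal_component_le[OF un q] un_le by linarith
  hence "(p \<bullet> p) * (q \<bullet> q) \<le> p \<bullet> p"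
    using power_le_one[OF norm_ge_zero, of q 2] by (simp add: power2_norm_eq_inner mult_left_le)
  hence "(p \<bullet> p) * (q \<bullet> q) * G \<le> (p \<bullet> p) * G"
    by (rule mult_right_mono) (simp add: G_def gram_det_nonneg)
  thus ?thesis
    unfolding G_Suc G_replaced by (simp add: algebra_simps)
qed

lemma gram_det_replace_ge:
  fixes u :: "nat \<Rightarrow> 'a::euclidean_space"
  assumes i: "i < k" and ui: "norm (u i) \<le> 1" and p: "\<And>j. j < k \<Longrightarrow> p \<bullet> u j = 0"
  shows "((c i)\<^sup>2 + p \<bullet> p) * gram_det k u \<le> gram_det k (u(i := (\<Sum>j<k. c j *\<^sub>R u j) + p))"
proof -
  obtain n where k: "k = Suc n" using i by (cases k) auto
  define \<pi> where "\<pi> = Transposition.transpose i n"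
  have \<pi>: "\<pi> permutes {..<Suc n}" unfolding \<pi>_def using i k by (intro permutes_swap_id) auto
  have \<pi>_n: "\<pi> n = i" by (simp add: \<pi>_def)
  have \<pi>_lt: "j < Suc n \<Longrightarrow> \<pi> j < Suc n" for j using permutes_in_image[OF \<pi>, of j] by simp
  define w where "w = (\<Sum>j<Suc n. c j *\<^sub>R u j) + p"
  have w: "w = (\<Sum>j<Suc n. (c \<circ> \<pi>) j *\<^sub>R (u \<circ> \<pi>) j) + p"
    unfolding w_def using sum.permute[OF \<pi>, of "\<lambda>j. c j *\<^sub>R u j"] by (simp add: o_def)
  have "u(i := w) \<circ> \<pi> = (u \<circ> \<pi>)(n := w)"
    by (auto simp: \<pi>_def Transposition.transpose_def)
  hence "gram_det (Suc n) (u(i := w)) = gram_det (Suc n) ((u \<circ> \<pi>)(n := w))"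
    using gram_det_permute[OF \<pi>, of "u(i := w)"] by simp
  also have "\<dots> \<ge> (((c \<circ> \<pi>) n)\<^sup>2 + p \<bullet> p) * gram_det (Suc n) (u \<circ> \<pi>)"
    unfolding w by (rule gram_det_replace_last_ge) (use ui p \<pi>_lt \<pi>_n k in auto)
  finally show ?thesis
    using gram_det_permute[OF \<pi>, of u] by (simp add: k w_def \<pi>_n o_def)
qed

lemma exists_large_coefficient:
  fixes u :: "nat \<Rightarrow> 'a::real_inner" and p :: 'a
  assumes k: "0 < k" and u: "\<And>j. j < k \<Longrightarrow> norm (u j) \<le> 1"
    and p: "\<And>j. j < k \<Longrightarrow> p \<bullet> u j = 0" and unit: "norm ((\<Sum>j<k. c j *\<^sub>R u j) + p) = 1"
  shows "\<exists>i<k. 1 / (real k)\<^sup>2 \<le> (c i)\<^sup>2 + p \<bullet> p"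
proof -
  define a where "a = (\<Sum>j<k. c j *\<^sub>R u j)"
  define m where "m = Max ((\<lambda>j. \<bar>c j\<bar>) ` {..<k})"
  have "m \<in> (\<lambda>j. \<bar>c j\<bar>) ` {..<k}"
    unfolding m_def using k by (intro Max_in) auto
  then obtain i where i: "i < k" and ci: "\<bar>c i\<bar> = m" by auto
  have i_max: "\<bar>c j\<bar> \<le> \<bar>c i\<bar>" if "j < k" for j
    unfolding ci m_def using that by (intro Max_ge) auto
  have "norm a \<le> (\<Sum>j<k. \<bar>c j\<bar> * norm (u j))"
    unfolding a_def by (rule order_trans[OF norm_sum]) simp
  also have "\<dots> \<le> (\<Sum>j<k. \<bar>c i\<bar>)"
    using i_max u by (intro sum_mono order_trans[OF mult_left_le]) auto
  finally have "norm a \<le> real k * \<bar>c i\<bar>" by simp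
  hence "(norm a)\<^sup>2 \<le> (real k)\<^sup>2 * (c i)\<^sup>2"
    using power_mono[OF _ norm_ge_zero, of a "real k * \<bar>c i\<bar>" 2] by (simp add: power_mult_distrib)
  moreover have "p \<bullet> a = 0"
    using p unfolding a_def by (simp add: inner_sum_right)
  hence "1 = (norm a)\<^sup>2 + (norm p)\<^sup>2"
    using norm_add_Pythagorean[of a p] unit[folded a_def]
    by (simp add: real_inner_class.orthogonal_def inner_commute)
  moreover have "(norm p)\<^sup>2 = p \<bullet> p" by (rule power2_norm_eq_inner)
  moreover have "p \<bullet> p \<le> (real k)\<^sup>2 * (p \<bullet> p)"
    using mult_right_mono[OF _ inner_ge_zero[of p], of 1 "(real k)\<^sup>2"] k by simp
  ultimately have "1 \<le> (real k)\<^sup>2 * ((c i)\<^sup>2 + p \<bullet> p)" by (simp add: algebra_simps)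
  thus ?thesis using i k by (auto simp: field_simps)
qed

lemma gram_det_exchange_ge:
  fixes u :: "nat \<Rightarrow> 'a::euclidean_space"
  assumes k: "0 < k" and u: "\<And>j. j < k \<Longrightarrow> norm (u j) = 1" and w: "norm w = 1"
  shows "\<exists>i<k. gram_det k u / (real k)\<^sup>2 \<le> gram_det k (u(i := w))"
proof -
  obtain c p where w_eq: "w = (\<Sum>j<k. c j *\<^sub>R u j) + p"
    and p: "\<And>j. j < k \<Longrightarrow> p \<bullet> u j = 0"
    using orthogonal_decomposition_lessThan[where x=w and n=k and u=u] by blast
  have u_le: "\<And>j. j < k \<Longrightarrow> norm (u j) \<le> 1" using u by simp
  have "norm ((\<Sum>j<k. c j *\<^sub>R u j) + p) = 1" using w w_eq by simp
  then obtain i where i: "i < k" and ci: "1 / (real k)\<^sup>2 \<le> (c i)\<^sup>2 + p \<bullet> p"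
    using exists_large_coefficient[where u=u, OF k u_le p] by blast
  have "gram_det k u / (real k)\<^sup>2 \<le> ((c i)\<^sup>2 + p \<bullet> p) * gram_det k u"
    using mult_right_mono[OF ci gram_det_nonneg] by simp
  also have "\<dots> \<le> gram_det k (u(i := w))"
    unfolding w_eq using i u p by (intro gram_det_replace_ge) auto
  finally show ?thesis using i by blast
qed

lemma simplex_vol_origin_pts: "simplex_vol k (origin_pts v) = sqrt (gram_det k (v \<circ> Suc)) / fact k"
  by (simp add: simplex_vol_def origin_pts_def o_def)

lemma simplex_vol_origin_pts_exchange:
  fixes v :: "nat \<Rightarrow> 'a::euclidean_space"
  assumes k: "0 < k" and v: "\<forall>i\<in>{1..k}. norm (v i) = 1" and w: "norm w = 1"
  shows "\<exists>i\<in>{1..k}.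
    simplex_vol k (origin_pts v) / real k \<le> simplex_vol k (origin_pts (v(i := w)))"
proof -
  obtain i where i: "i < k"
    and G: "gram_det k (v \<circ> Suc) / (real k)\<^sup>2 \<le> gram_det k ((v \<circ> Suc)(i := w))"
    using gram_det_exchange_ge[OF k _ w, of "v \<circ> Suc"] v by auto
  have "v(Suc i := w) \<circ> Suc = (v \<circ> Suc)(i := w)" by auto
  hence "sqrt (gram_det k (v \<circ> Suc)) / real k \<le> sqrt (gram_det k (v(Suc i := w) \<circ> Suc))"
    using real_sqrt_le_mono[OF G] by (simp add: real_sqrt_divide)
  hence "sqrt (gram_det k (v \<circ> Suc)) / real k / fact k
      \<le> sqrt (gram_det k (v(Suc i := w) \<circ> Suc)) / fact k"
    by (rule divide_right_mono) simp
  hence "simplex_vol k (origin_pts v) / real k \<le> simplex_vol k (origin_pts (v(Suc i := w)))"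
    by (simp add: simplex_vol_origin_pts mult.commute)
  thus ?thesis using i by (intro bexI[of _ "Suc i"]) auto
qed

lemma diameter_origin_pts_bounds:
  fixes v :: "nat \<Rightarrow> 'a::euclidean_space"
  assumes k: "1 \<le> k" and v: "\<forall>i\<in>{1..k}. norm (v i) = 1"
  shows "1 \<le> diameter (convex hull (origin_pts v ` {0..k}))"
    and "diameter (convex hull (origin_pts v ` {0..k})) \<le> 2"
proof -
  let ?H = "convex hull (origin_pts v ` {0..k})"
  have "origin_pts v ` {0..k} \<subseteq> cball 0 1"
    using v by (auto simp: origin_pts_def)
  hence H: "?H \<subseteq> cball 0 1" by (intro hull_minimal) (auto simp: convex_cball)
  have "origin_pts v 0 \<in> ?H" "origin_pts v 1 \<in> ?H" using k by (auto intro: hull_inc)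
  hence "dist (origin_pts v 0) (origin_pts v 1) \<le> diameter ?H"
    using H by (intro diameter_bounded_bound) (auto intro: bounded_subset)
  thus "1 \<le> diameter ?H" using v k by (simp add: origin_pts_def)
  show "diameter ?H \<le> 2"
    using diameter_subset[OF H] by simp
qed

lemma fullness_origin_pts_bounds:
  fixes v :: "nat \<Rightarrow> 'a::euclidean_space"
  assumes k: "1 \<le> k" and v: "\<forall>i\<in>{1..k}. norm (v i) = 1"
  shows "simplex_vol k (origin_pts v) / 2 ^ k \<le> fullness k (origin_pts v)"
    and "fullness k (origin_pts v) \<le> simplex_vol k (origin_pts v)"
proof -
  let ?D = "diameter (convex hull (origin_pts v ` {0..k}))"
  have vol: "0 \<le> simplex_vol k (origin_pts v)"
    by (simp add: simplex_vol_origin_pts gram_det_nonneg)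
  have D: "1 \<le> ?D ^ k" "?D ^ k \<le> 2 ^ k"
    using diameter_origin_pts_bounds[OF k v] by (auto intro: one_le_power power_mono)
  show "simplex_vol k (origin_pts v) / 2 ^ k \<le> fullness k (origin_pts v)"
    unfolding fullness_def using D vol by (intro divide_left_mono) auto
  show "fullness k (origin_pts v) \<le> simplex_vol k (origin_pts v)"
    unfolding fullness_def using divide_left_mono[OF D(1) vol] D(1) by simp
qed

theorem lemma3p6:
  fixes v :: "nat \<Rightarrow> real ^ 'n" and w :: "real ^ 'n" and k :: nat and \<theta> :: real
  assumes "2 \<le> k" and "k \<le> CARD('n)" and "\<theta> > 0"
    and "\<forall>i\<in>{1..k}. norm (v i) = 1" and "norm w = 1"
    and "fullness k (origin_pts v) \<ge> \<theta>"
  shows "\<exists>i\<in>{1..k}. fullness k (origin_pts (v(i := w))) \<ge> \<theta> / (real k * 2 ^ (k + 1))"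
proof -
  have k: "1 \<le> k" using assms(1) by simp
  obtain i where i: "i \<in> {1..k}"
    and vol: "simplex_vol k (origin_pts v) / real k \<le> simplex_vol k (origin_pts (v(i := w)))"
    using simplex_vol_origin_pts_exchange[of k v w] assms(4,5) k by auto
  have "\<theta> \<le> simplex_vol k (origin_pts v)"
    using fullness_origin_pts_bounds(2)[OF k assms(4)] assms(6) by linarith
  hence "\<theta> / (real k * 2 ^ (k + 1)) \<le> simplex_vol k (origin_pts v) / real k / 2 ^ k"
    using assms(3) k by (simp add: field_simps)
  also have "\<dots> \<le> simplex_vol k (origin_pts (v(i := w))) / 2 ^ k"
    by (rule divide_right_mono[OF vol]) simp
  also have "\<dots> \<le> fullness k (origin_pts (v(i := w)))"
    using assms(4,5) i by (intro fullness_origin_pts_bounds(1)[OF k]) auto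
  finally show ?thesis using i by blast
qed

end
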